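(* Let $\varepsilon\in(0,1)$, a block partition $1=\kappa_1<\dots<\kappa_{J+1}=N+1$ and $j\in\{1,\dots,J\}$. Assume $\varphi_j<1$ and $\varphi_j^2T_j\ge24\log\varepsilon^{-5}$. Then for every $k\in B_j$, $${\bf P}_{\vartheta,f}\Big(\hat h^{JS}_k\in\Big[h^*_k-\frac{2(1-h^*_k)\varphi_j}{1-\varphi_j},\ h^*_k\Big]\Big)\ge1-2\varepsilon^5.$$
   Context: Model: $\vartheta\in\mathbb R$, $f$ locally square integrable, even, $1$-periodic, $f_k=\sqrt2\int_{-1/2}^{1/2}\cos(2\pi kt)f(t)dt$. Observations $x_k=f_k\cos(2\pi k\vartheta)+\varepsilon\xi_k$, $x_k^*=f_k\sin(2\pi k\vartheta)+\varepsilon\xi_k^*$, $\xi_k,\xi_k^*$ i.i.d. $\mathcal N(0,1)$, law ${\bf P}_{\vartheta,f}$. Blocks $B_j=\{\kappa_j,\dots,\kappa_{j+1}-1\}$, $T_j=\kappa_{j+1}-\kappa_j$, $\sigma_j^2=\sum_{k\in B_j}(2\pi k)^2$, $\|f'\|^2_{(j)}=\sum_{k\in B_j}(2\pi k)^2f_k^2$. Oracle: $h^*_k=\|f'\|^2_{(j)}/(\|f'\|^2_{(j)}+\varepsilon^2\sigma_j^2)$ for $k\in B_j$. Penalized Stein filter with penalty $\varphi_j>0$: $\hat h^{JS}_k=\Big(1-\frac{\varepsilon^2\sigma_j^2(1+\varphi_j)}{(\|y'\|^2_{(j)}-2\varepsilon^2\sigma_j^2)_++\varepsilon^2\sigma_j^2}\Big)_+$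 for $k\in B_j$, where $\|y'\|^2_{(j)}=\sum_{k\in B_j}(2\pi k)^2(x_k^2+{x_k^*}^2)$. *)

theory Defs
  imports "HOL-Probability.Probability"
begin

definition fcoef :: "(real \<Rightarrow> real) \<Rightarrow> nat \<Rightarrow> real" where
  "fcoef f k = sqrt 2 * (LBINT t=-(1/2)..1/2. cos (2 * pi * real k * t) * f t)"

definition block :: "(nat \<Rightarrow> nat) \<Rightarrow> nat \<Rightarrow> nat set" where
  "block \<kappa> j = {\<kappa> j ..< \<kappa> (Suc j)}"

definition blen :: "(nat \<Rightarrow> nat) \<Rightarrow> nat \<Rightarrow> nat" where
  "blen \<kappa> j = \<kappa> (Suc j) - \<kappa> j"

definition sigma2 :: "(nat \<Rightarrow> nat) \<Rightarrow> nat \<Rightarrow> real" where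
  "sigma2 \<kappa> j = (\<Sum>k\<in>block \<kappa> j. (2 * pi * real k)^2)"

definition dnorm2 :: "(nat \<Rightarrow> real) \<Rightarrow> (nat \<Rightarrow> nat) \<Rightarrow> nat \<Rightarrow> real" where
  "dnorm2 F \<kappa> j = (\<Sum>k\<in>block \<kappa> j. (2 * pi * real k)^2 * (F k)^2)"

definition oracle_h :: "(nat \<Rightarrow> real) \<Rightarrow> real \<Rightarrow> (nat \<Rightarrow> nat) \<Rightarrow> nat \<Rightarrow> real" where
  "oracle_h F \<epsilon> \<kappa> j = dnorm2 F \<kappa> j / (dnorm2 F \<kappa> j + \<epsilon>^2 * sigma2 \<kappa> j)"

(* the noise space: i.i.d. N(0,1) variables indexed by (k, True) for xi_k and (k, False) for xi*_k *)
definition noise :: "(nat \<times> bool \<Rightarrow> real) measure" where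
  "noise = (\<Pi>\<^sub>M i\<in>UNIV. density lborel std_normal_density)"

definition obs_x :: "(nat \<Rightarrow> real) \<Rightarrow> real \<Rightarrow> real \<Rightarrow> (nat \<times> bool \<Rightarrow> real) \<Rightarrow> nat \<Rightarrow> real" where
  "obs_x F \<theta> \<epsilon> \<omega> k = F k * cos (2 * pi * real k * \<theta>) + \<epsilon> * \<omega> (k, True)"

definition obs_xs :: "(nat \<Rightarrow> real) \<Rightarrow> real \<Rightarrow> real \<Rightarrow> (nat \<times> bool \<Rightarrow> real) \<Rightarrow> nat \<Rightarrow> real" where
  "obs_xs F \<theta> \<epsilon> \<omega> k = F k * sin (2 * pi * real k * \<theta>) + \<epsilon> * \<omega> (k, False)"

definition ynorm2 :: "(nat \<Rightarrow> real) \<Rightarrow> (nat \<Rightarrow> real) \<Rightarrow> (nat \<Rightarrow> nat) \<Rightarrow> nat \<Rightarrow> real" where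
  "ynorm2 x xs \<kappa> j = (\<Sum>k\<in>block \<kappa> j. (2 * pi * real k)^2 * ((x k)^2 + (xs k)^2))"

definition stein :: "real \<Rightarrow> real \<Rightarrow> (nat \<Rightarrow> nat) \<Rightarrow> nat \<Rightarrow> (nat \<Rightarrow> real) \<Rightarrow> (nat \<Rightarrow> real) \<Rightarrow> real" where
  "stein \<epsilon> \<phi> \<kappa> j x xs =
     max 0 (1 - \<epsilon>^2 * sigma2 \<kappa> j * (1 + \<phi>) /
       (max 0 (ynorm2 x xs \<kappa> j - 2 * \<epsilon>^2 * sigma2 \<kappa> j) + \<epsilon>^2 * sigma2 \<kappa> j))"

end

theory Submission
  imports Defs
begin

(* The block energy Y = ||y'||^2_(j) is a weighted sum of 2 T_j noncentral chi-square variables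
   with mean D + 2 eps^2 sigma_j^2, where D = ||f'||^2_(j). The Stein filter is a monotone function
   of Y, and a short computation shows that it lies in the stated interval around the oracle h*_k
   as soon as |Y - EY| <= phi_j (D + eps^2 sigma_j^2). The probability of the complementary
   deviation event is bounded by a Chernoff argument with the explicit Gaussian moment generating
   function E exp(t (m + e xi)^2) = exp(t m^2 / (1 - 2 t e^2)) / sqrt (1 - 2 t e^2); since the block
   consists of consecutive frequencies, no single weight (2 pi k)^2 dominates the block, and the
   resulting exponent is at most -phi_j^2 T_j / 24 <= 5 log eps. *)

lemma ln_one_minus_double_ge:
  fixes x :: real
  assumes "x \<le> 1/5"
  shows "-2*x - 26/9*x^2 \<le> ln (1 - 2*x)"
proof -
  define g where "g y = ln (1 - 2*y) + 2*y + 2*y^2 + 8/3*y^3/(1 - 2*y)" for y :: real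
  define g' where "g' y = 16/3*y^3/(1 - 2*y)^2" for y :: real
  have deriv: "(g has_real_derivative g' y) (at y)" if "y < 1/2" for y
  proof -
    have "0 < 1 - 2*y" "3 - 6*y \<noteq> 0" using that by simp_all
    then show ?thesis
      unfolding g_def[abs_def] g'_def
      apply (auto intro!: derivative_eq_intros)
       apply (simp add: divide_simps)
      apply (simp add: algebra_simps power2_eq_square power3_eq_cube)
      done
  qed
  have x_half: "x < 1/2" using assms by simp
  have "g 0 \<le> g x"
  proof (cases "0 \<le> x")
    case True
    show ?thesis
    proof (rule deriv_nonneg_imp_mono[of 0 x g g'])
      fix y assume "y \<in> {0..x}"
      then show "(g has_real_derivative g' y) (at y)" "0 \<le> g' y"
        using x_half by (auto intro: deriv) (simp add: g'_def)
    qed (use True in simp)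
  next
    case False
    show ?thesis
    proof (rule deriv_nonpos_imp_antimono[of x 0 g g'])
      fix y assume "y \<in> {x..0}"
      then show "(g has_real_derivative g' y) (at y)" "g' y \<le> 0"
        using x_half by (auto intro: deriv) (simp add: g'_def divide_nonpos_nonneg)
    qed (use False in simp)
  qed
  then have "-2*x - 2*x^2 - 8/3*x^3/(1 - 2*x) \<le> ln (1 - 2*x)"
    unfolding g_def by simp
  moreover have "8/3*x^3/(1 - 2*x) \<le> 8/9*x^2"
  proof -
    have "x/(1 - 2*x) \<le> 1/3" using assms by (simp add: divide_simps)
    then have "8/3*x^2*(x/(1 - 2*x)) \<le> 8/3*x^2*(1/3)"
      by (intro mult_left_mono) auto
    then show ?thesis by (simp add: power3_eq_cube power2_eq_square)
  qed
  ultimately show ?thesis by simp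
qed

lemma exp_div_sqrt_one_minus_double_le:
  fixes a x \<phi> :: real
  assumes x: "\<bar>x\<bar> \<le> \<phi>/5" and \<phi>: "\<phi> \<le> 1"
  shows "exp (a/(1 - 2*x)) / sqrt (1 - 2*x) \<le> exp (a + \<phi>*\<bar>a\<bar> + (x + 13/9*x^2))"
proof -
  have pos: "0 < 1 - 2*x" using x \<phi> by linarith
  have "a/(1 - 2*x) - a = a * (2*x/(1 - 2*x))"
    using pos by (simp add: field_simps)
  also have "\<dots> \<le> \<bar>a\<bar> * \<phi>"
  proof -
    have "0 \<le> \<phi>" "x \<le> 1/5" using x \<phi> by linarith+
    then have "2*\<bar>x\<bar> \<le> \<phi>*(3/5)" "\<phi>*(3/5) \<le> \<phi>*(1 - 2*x)"
      using x by (linarith, intro mult_left_mono, linarith+)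
    then have "\<bar>2*x/(1 - 2*x)\<bar> \<le> \<phi>" using pos by (simp add: abs_divide divide_le_eq)
    then have "\<bar>a\<bar> * \<bar>2*x/(1 - 2*x)\<bar> \<le> \<bar>a\<bar> * \<phi>"
      by (rule mult_left_mono) simp
    then show ?thesis by (metis abs_ge_self abs_mult order_trans)
  qed
  finally have shrink: "a/(1 - 2*x) \<le> a + \<phi>*\<bar>a\<bar>" by (simp add: mult.commute)
  have "sqrt (1 - 2*x) = exp (ln (1 - 2*x) / 2)"
    using pos by (simp add: powr_half_sqrt[symmetric] powr_def)
  then have "1 / sqrt (1 - 2*x) = exp (- (ln (1 - 2*x) / 2))"
    by (simp add: exp_minus inverse_eq_divide)
  also have "\<dots> \<le> exp (x + 13/9*x^2)"
  proof -
    have "x \<le> 1/5" using x \<phi> by linarith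
    then show ?thesis using ln_one_minus_double_ge[of x] by simp
  qed
  finally have "exp (a/(1 - 2*x)) * (1 / sqrt (1 - 2*x)) \<le> exp (a + \<phi>*\<bar>a\<bar>) * exp (x + 13/9*x^2)"
    using shrink pos by (intro mult_mono) auto
  then show ?thesis by (simp add: exp_add)
qed

lemma std_normal_density_mult_exp_square:
  fixes t m e x :: real
  defines "a \<equiv> 1 - 2*t*e^2"
  assumes a: "0 < a"
  shows "std_normal_density x * exp (t*(m + e*x)^2)
    = exp (t*m^2/a) / sqrt a * normal_density (2*t*e*m/a) (1/sqrt a) x"
proof -
  define \<mu> where "\<mu> = 2*t*e*m/a"
  have "t*m^2/a - a/2*(x - \<mu>)^2 = (t*m^2 - 2*t^2*e^2*m^2)/a - a/2*x^2 + 2*t*e*m*x"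
    using a unfolding \<mu>_def by (simp add: field_simps power2_eq_square)
  also have "t*m^2 - 2*t^2*e^2*m^2 = t*m^2*a"
    unfolding a_def by (simp add: algebra_simps power2_eq_square)
  finally have "t*m^2/a - a/2*(x - \<mu>)^2 = t*m^2 - a/2*x^2 + 2*t*e*m*x"
    using a by simp
  then have square: "-(x^2)/2 + t*(m + e*x)^2 = t*m^2/a - a/2*(x - \<mu>)^2"
    by (simp only:) (simp add: a_def field_simps power2_eq_square)
  have density: "normal_density \<mu> (1/sqrt a) x = sqrt a / sqrt (2*pi) * exp (- a/2*(x - \<mu>)^2)"
    using a by (simp add: normal_density_def real_sqrt_divide field_simps)
  have "exp (t*m^2/a) / sqrt a * normal_density \<mu> (1/sqrt a) x
      = 1 / sqrt (2*pi) * (exp (t*m^2/a) * exp (- a/2*(x - \<mu>)^2))"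
    unfolding density using a by simp
  also have "\<dots> = 1 / sqrt (2*pi) * exp (t*m^2/a - a/2*(x - \<mu>)^2)"
    by (simp add: mult_exp_exp)
  also have "\<dots> = std_normal_density x * exp (t*(m + e*x)^2)"
    unfolding square[symmetric] by (simp add: normal_density_def exp_add mult_exp_exp)
  finally show ?thesis unfolding \<mu>_def by simp
qed

lemma nn_integral_std_normal_exp_square:
  fixes t m e :: real
  assumes a: "0 < 1 - 2*t*e^2"
  shows "(\<integral>\<^sup>+x. ennreal (exp (t*(m + e*x)^2)) \<partial>std_normal_distribution)
    = ennreal (exp (t*m^2/(1 - 2*t*e^2)) / sqrt (1 - 2*t*e^2))"
proof -
  define a where "a = 1 - 2*t*e^2"
  define C where "C = exp (t*m^2/a) / sqrt a"
  have "0 \<le> C" using a unfolding C_def a_def by simp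
  have "(\<integral>\<^sup>+x. ennreal (exp (t*(m + e*x)^2)) \<partial>std_normal_distribution)
      = (\<integral>\<^sup>+x. ennreal C * ennreal (normal_density (2*t*e*m/a) (1/sqrt a) x) \<partial>lborel)"
    using a \<open>0 \<le> C\<close> unfolding a_def C_def
    by (auto simp: nn_integral_density std_normal_density_mult_exp_square ennreal_mult[symmetric]
        intro!: nn_integral_cong)
  also have "\<dots> = ennreal C * (\<integral>\<^sup>+x. ennreal (normal_density (2*t*e*m/a) (1/sqrt a) x) \<partial>lborel)"
    by (rule nn_integral_cmult) auto
  also have "(\<integral>\<^sup>+x. ennreal (normal_density (2*t*e*m/a) (1/sqrt a) x) \<partial>lborel) = 1"
    using prob_space.emeasure_space_1[OF prob_space_normal_density] a
    by (simp add: emeasure_density a_def)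
  finally show ?thesis unfolding C_def a_def by simp
qed

lemma nn_integral_PiM_prod_coordinates:
  fixes g :: "'i \<Rightarrow> 'a \<Rightarrow> ennreal"
  assumes M: "prob_space M" and W: "finite W" "W \<subseteq> I"
    and g: "\<And>i. i \<in> W \<Longrightarrow> g i \<in> borel_measurable M"
  shows "(\<integral>\<^sup>+\<omega>. (\<Prod>i\<in>W. g i (\<omega> i)) \<partial>PiM I (\<lambda>_. M)) = (\<Prod>i\<in>W. \<integral>\<^sup>+x. g i x \<partial>M)"
proof -
  interpret P: product_prob_space "\<lambda>_. M" I
    using M by (simp add: product_prob_space_def product_sigma_finite_def product_prob_space_axioms_def
        prob_space_imp_sigma_finite)
  have restrict: "(\<lambda>\<omega>. restrict \<omega> W) \<in> measurable (PiM I (\<lambda>_. M)) (PiM W (\<lambda>_. M))"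
    using W by (intro measurable_restrict_subset)
  have prod: "(\<lambda>y. \<Prod>i\<in>W. g i (y i)) \<in> borel_measurable (PiM W (\<lambda>_. M))"
    using g by (intro borel_measurable_prod_ennreal)
      (auto intro: measurable_compose[OF measurable_component_singleton])
  have "(\<integral>\<^sup>+\<omega>. (\<Prod>i\<in>W. g i (\<omega> i)) \<partial>PiM I (\<lambda>_. M))
      = (\<integral>\<^sup>+\<omega>. (\<Prod>i\<in>W. g i (restrict \<omega> W i)) \<partial>PiM I (\<lambda>_. M))"
    by (intro nn_integral_cong prod.cong) auto
  also have "\<dots> = (\<integral>\<^sup>+y. (\<Prod>i\<in>W. g i (y i)) \<partial>distr (PiM I (\<lambda>_. M)) (PiM W (\<lambda>_. M)) (\<lambda>\<omega>. restrict \<omega> W))"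
    using restrict prod by (simp add: nn_integral_distr)
  also have "\<dots> = (\<integral>\<^sup>+y. (\<Prod>i\<in>W. g i (y i)) \<partial>PiM W (\<lambda>_. M))"
    using W by (simp add: P.distr_PiM_restrict_finite)
  also have "\<dots> = (\<Prod>i\<in>W. \<integral>\<^sup>+x. g i x \<partial>M)"
    using W g by (intro P.product_nn_integral_prod) auto
  finally show ?thesis .
qed

lemma prob_space_noise: "prob_space noise"
  unfolding noise_def by (intro prob_space_PiM prob_space_normal_density) simp

lemma nn_integral_noise_exp_weighted_squares:
  fixes W :: "(nat \<times> bool) set" and t m :: "nat \<times> bool \<Rightarrow> real" and e :: real
  assumes W: "finite W" and t: "\<And>i. i \<in> W \<Longrightarrow> 0 < 1 - 2*t i*e^2"
  shows "(\<integral>\<^sup>+\<omega>. ennreal (exp (\<Sum>i\<in>W. t i*(m i + e*\<omega> i)^2)) \<partial>noise)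
    = ennreal (\<Prod>i\<in>W. exp (t i*(m i)^2/(1 - 2*t i*e^2)) / sqrt (1 - 2*t i*e^2))"
proof -
  have "(\<integral>\<^sup>+\<omega>. ennreal (exp (\<Sum>i\<in>W. t i*(m i + e*\<omega> i)^2)) \<partial>noise)
      = (\<integral>\<^sup>+\<omega>. (\<Prod>i\<in>W. ennreal (exp (t i*(m i + e*\<omega> i)^2))) \<partial>noise)"
    using W by (simp add: exp_sum prod_ennreal)
  also have "\<dots> = (\<Prod>i\<in>W. \<integral>\<^sup>+x. ennreal (exp (t i*(m i + e*x)^2)) \<partial>std_normal_distribution)"
    unfolding noise_def using W
    by (intro nn_integral_PiM_prod_coordinates prob_space_normal_density) auto
  also have "\<dots> = (\<Prod>i\<in>W. ennreal (exp (t i*(m i)^2/(1 - 2*t i*e^2)) / sqrt (1 - 2*t i*e^2)))"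
    using t by (intro prod.cong refl nn_integral_std_normal_exp_square)
  also have "\<dots> = ennreal (\<Prod>i\<in>W. exp (t i*(m i)^2/(1 - 2*t i*e^2)) / sqrt (1 - 2*t i*e^2))"
    using t by (intro prod_ennreal) (simp add: less_imp_le)
  finally show ?thesis .
qed

lemma nn_integral_noise_exp_weighted_chi2_le:
  fixes W :: "(nat \<times> bool) set" and w m :: "nat \<times> bool \<Rightarrow> real" and t e \<phi> :: real
  assumes W: "finite W" and w: "\<And>i. i \<in> W \<Longrightarrow> 0 \<le> w i"
    and small: "\<And>i. i \<in> W \<Longrightarrow> \<bar>t*e^2*w i\<bar> \<le> \<phi>/5" and \<phi>: "\<phi> \<le> 1"
  shows "(\<integral>\<^sup>+\<omega>. ennreal (exp (t * (\<Sum>i\<in>W. w i*(m i + e*\<omega> i)^2))) \<partial>noise)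
    \<le> ennreal (exp (t*((\<Sum>i\<in>W. w i*(m i)^2) + e^2*(\<Sum>i\<in>W. w i))
        + \<phi>*\<bar>t\<bar>*(\<Sum>i\<in>W. w i*(m i)^2) + 13/9*(\<Sum>i\<in>W. (t*e^2*w i)^2)))"
proof -
  define x where "x i = t*e^2*w i" for i
  define a where "a i = t*w i*(m i)^2" for i
  have pos: "0 < 1 - 2*(t*w i)*e^2" if "i \<in> W" for i
    using small[OF that] \<phi> by (simp add: mult_ac)
  have "(\<integral>\<^sup>+\<omega>. ennreal (exp (t * (\<Sum>i\<in>W. w i*(m i + e*\<omega> i)^2))) \<partial>noise)
      = (\<integral>\<^sup>+\<omega>. ennreal (exp (\<Sum>i\<in>W. (t*w i)*(m i + e*\<omega> i)^2)) \<partial>noise)"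
    by (simp add: sum_distrib_left mult.assoc)
  also have "\<dots> = ennreal (\<Prod>i\<in>W. exp ((t*w i)*(m i)^2/(1 - 2*(t*w i)*e^2)) / sqrt (1 - 2*(t*w i)*e^2))"
    by (rule nn_integral_noise_exp_weighted_squares[OF W pos])
  also have "\<dots> = ennreal (\<Prod>i\<in>W. exp (a i/(1 - 2*x i)) / sqrt (1 - 2*x i))"
    unfolding a_def x_def by (simp add: mult_ac)
  also have "\<dots> \<le> ennreal (\<Prod>i\<in>W. exp (a i + \<phi>*\<bar>a i\<bar> + (x i + 13/9*(x i)^2)))"
    using small \<phi> pos unfolding x_def
    by (intro ennreal_leI prod_mono conjI exp_div_sqrt_one_minus_double_le divide_nonneg_nonneg)
      (auto simp: mult_ac less_imp_le)
  also have "\<dots> = ennreal (exp (\<Sum>i\<in>W. a i + \<phi>*\<bar>a i\<bar> + (x i + 13/9*(x i)^2)))"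
    using W by (simp add: exp_sum)
  also have "(\<Sum>i\<in>W. a i + \<phi>*\<bar>a i\<bar> + (x i + 13/9*(x i)^2))
      = (\<Sum>i\<in>W. a i) + \<phi>*(\<Sum>i\<in>W. \<bar>a i\<bar>) + (\<Sum>i\<in>W. x i) + 13/9*(\<Sum>i\<in>W. (x i)^2)"
    by (simp add: sum.distrib sum_distrib_left)
  also have "(\<Sum>i\<in>W. \<bar>a i\<bar>) = \<bar>t\<bar>*(\<Sum>i\<in>W. w i*(m i)^2)"
    using w unfolding a_def by (simp add: sum_distrib_left abs_mult mult.assoc)
  also have "(\<Sum>i\<in>W. a i) = t*(\<Sum>i\<in>W. w i*(m i)^2)"
    unfolding a_def by (simp add: sum_distrib_left mult.assoc)
  also have "(\<Sum>i\<in>W. x i) = t*(e^2*(\<Sum>i\<in>W. w i))"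
    unfolding x_def by (simp add: sum_distrib_left mult.assoc)
  finally show ?thesis
    unfolding x_def by (simp add: algebra_simps)
qed

lemma noise_weighted_chi2_tail_le:
  fixes W :: "(nat \<times> bool) set" and w m :: "nat \<times> bool \<Rightarrow> real" and t e \<phi> c :: real
  defines "Y \<equiv> \<lambda>\<omega>. \<Sum>i\<in>W. w i*(m i + e*\<omega> i)^2"
    and "D \<equiv> \<Sum>i\<in>W. w i*(m i)^2" and "V \<equiv> e^2*(\<Sum>i\<in>W. w i)"
  assumes W: "finite W" and w: "\<And>i. i \<in> W \<Longrightarrow> 0 \<le> w i"
    and small: "\<And>i. i \<in> W \<Longrightarrow> \<bar>t*e^2*w i\<bar> \<le> \<phi>/5" and \<phi>: "\<phi> \<le> 1"
  shows "measure noise {\<omega> \<in> space noise. c \<le> t * Y \<omega>}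
    \<le> exp (- c + t*(D + V) + \<phi>*\<bar>t\<bar>*D + 13/9*(\<Sum>i\<in>W. (t*e^2*w i)^2))"
proof -
  interpret prob_space noise by (rule prob_space_noise)
  define B where "B = t*(D + V) + \<phi>*\<bar>t\<bar>*D + 13/9*(\<Sum>i\<in>W. (t*e^2*w i)^2)"
  have [measurable]: "(\<lambda>\<omega>. t * Y \<omega>) \<in> borel_measurable noise"
    unfolding Y_def noise_def by measurable
  have mgf: "(\<integral>\<^sup>+\<omega>. ennreal (exp (t * Y \<omega>)) \<partial>noise) \<le> ennreal (exp B)"
    unfolding Y_def B_def D_def V_def using W w small \<phi>
    by (rule nn_integral_noise_exp_weighted_chi2_le)
  have "emeasure noise {\<omega> \<in> space noise. c \<le> t * Y \<omega>}
      \<le> ennreal (exp (-1*c)) * (\<integral>\<^sup>+\<omega>. ennreal (exp (1*(t * Y \<omega>))) * indicator (space noise) \<omega> \<partial>noise)"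
    by (rule Chernoff_ineq_nn_integral_ge) auto
  also have "\<dots> = ennreal (exp (- c)) * (\<integral>\<^sup>+\<omega>. ennreal (exp (t * Y \<omega>)) \<partial>noise)"
    by (simp cong: nn_integral_cong)
  also have "\<dots> \<le> ennreal (exp (- c)) * ennreal (exp B)"
    using mgf by (rule mult_left_mono) simp
  finally have "emeasure noise {\<omega> \<in> space noise. c \<le> t * Y \<omega>} \<le> ennreal (exp (- c + B))"
    by (simp flip: ennreal_mult add: mult_exp_exp)
  then show ?thesis
    unfolding B_def emeasure_eq_measure by (simp add: ennreal_le_iff algebra_simps)
qed

lemma noise_weighted_chi2_deviation_le:
  fixes W :: "(nat \<times> bool) set" and w m :: "nat \<times> bool \<Rightarrow> real" and l e \<phi> :: real
  defines "Y \<equiv> \<lambda>\<omega>. \<Sum>i\<in>W. w i*(m i + e*\<omega> i)^2"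
    and "D \<equiv> \<Sum>i\<in>W. w i*(m i)^2" and "V \<equiv> e^2*(\<Sum>i\<in>W. w i)"
  assumes W: "finite W" and w: "\<And>i. i \<in> W \<Longrightarrow> 0 \<le> w i" and l: "0 \<le> l"
    and small: "\<And>i. i \<in> W \<Longrightarrow> l*e^2*w i \<le> \<phi>/5" and \<phi>: "\<phi> \<le> 1"
  shows "measure noise {\<omega> \<in> space noise. \<phi>*(D + V/2) < \<bar>Y \<omega> - (D + V)\<bar>}
    \<le> 2 * exp (- l*\<phi>*V/2 + 13/9*(\<Sum>i\<in>W. (l*e^2*w i)^2))"
proof -
  interpret prob_space noise by (rule prob_space_noise)
  define B where "B = - l*\<phi>*V/2 + 13/9*(\<Sum>i\<in>W. (l*e^2*w i)^2)"
  define U where "U = {\<omega> \<in> space noise. l*(D + V + \<phi>*(D + V/2)) \<le> l * Y \<omega>}"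
  define L where "L = {\<omega> \<in> space noise. - l*(D + V - \<phi>*(D + V/2)) \<le> - l * Y \<omega>}"
  have small_pos: "\<bar>l*e^2*w i\<bar> \<le> \<phi>/5" and small_neg: "\<bar>-l*e^2*w i\<bar> \<le> \<phi>/5" if "i \<in> W" for i
    using small[OF that] w[OF that] l by (simp_all add: abs_mult)
  have U: "measure noise U \<le> exp B"
    using noise_weighted_chi2_tail_le[where W=W and w=w and m=m and e=e and \<phi>=\<phi> and t=l
        and c="l*(D + V + \<phi>*(D + V/2))", OF W w small_pos \<phi>]
    unfolding U_def B_def Y_def D_def V_def using l by (simp add: algebra_simps)
  have L: "measure noise L \<le> exp B"
    using noise_weighted_chi2_tail_le[where W=W and w=w and m=m and e=e and \<phi>=\<phi> and t="-l"
        and c="- l*(D + V - \<phi>*(D + V/2))", OF W w small_neg \<phi>]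
    unfolding L_def B_def Y_def D_def V_def using l by (simp add: algebra_simps power2_eq_square)
  have cover: "{\<omega> \<in> space noise. \<phi>*(D + V/2) < \<bar>Y \<omega> - (D + V)\<bar>} \<subseteq> U \<union> L"
  proof
    fix \<omega> assume \<omega>: "\<omega> \<in> {\<omega> \<in> space noise. \<phi>*(D + V/2) < \<bar>Y \<omega> - (D + V)\<bar>}"
    then have "D + V + \<phi>*(D + V/2) \<le> Y \<omega> \<or> Y \<omega> \<le> D + V - \<phi>*(D + V/2)"
      by auto
    then show "\<omega> \<in> U \<union> L"
      using \<omega> l unfolding U_def L_def by (auto intro: mult_left_mono)
  qed
  have [measurable]: "U \<in> sets noise" "L \<in> sets noise"
    unfolding U_def L_def Y_def noise_def by measurable
  have "measure noise {\<omega> \<in> space noise. \<phi>*(D + V/2) < \<bar>Y \<omega> - (D + V)\<bar>} \<le> measure noise (U \<union> L)"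
    using cover by (intro finite_measure_mono) auto
  also have "\<dots> \<le> measure noise U + measure noise L"
    by (intro measure_Un_le) auto
  finally show ?thesis
    using U L unfolding B_def by simp
qed

lemma sum_squares_atLeastLessThan:
  fixes a T :: nat
  shows "6*(\<Sum>k\<in>{a..<a+T}. (real k)^2)
    = 6*real T*(real a - 1)^2 + 6*(real a - 1)*real T*(real T + 1) + real T*(real T + 1)*(2*real T + 1)"
proof (induction T)
  case (Suc T)
  have "{a..<a + Suc T} = insert (a + T) {a..<a + T}" by auto
  then show ?case
    using Suc.IH by (simp add: algebra_simps power2_eq_square)
qed simp

lemma sum_fourth_powers_atLeastLessThan:
  fixes a T :: nat
  shows "30*(\<Sum>k\<in>{a..<a+T}. (real k)^4)
    = 30*real T*(real a - 1)^4 + 60*(real a - 1)^3*real T*(real T + 1)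
      + 30*(real a - 1)^2*real T*(real T + 1)*(2*real T + 1) + 30*(real a - 1)*(real T)^2*(real T + 1)^2
      + real T*(real T + 1)*(2*real T + 1)*(3*(real T)^2 + 3*real T - 1)"
proof (induction T)
  case (Suc T)
  have "{a..<a + Suc T} = insert (a + T) {a..<a + T}" by auto
  then show ?case
    using Suc.IH by (simp add: algebra_simps power2_eq_square power3_eq_cube power4_eq_xxxx)
qed simp

lemma square_le_sum_squares_atLeastLessThan:
  fixes a T k :: nat
  assumes a: "1 \<le> a" and k: "k \<in> {a..<a+T}"
  shows "real T * (real k)^2 \<le> 3*(\<Sum>i\<in>{a..<a+T}. (real i)^2)"
proof -
  define c where "c = real a - 1"
  have c: "0 \<le> c" using a unfolding c_def by simp
  have "real k \<le> c + real T" using k unfolding c_def by auto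
  then have "real T * (real k)^2 \<le> real T * (c + real T)^2"
    by (intro mult_left_mono power_mono) auto
  also have "\<dots> \<le> (6*real T*c^2 + 6*c*real T*(real T + 1) + real T*(real T + 1)*(2*real T + 1))/2"
  proof -
    have "6*real T*c^2 + 6*c*real T*(real T + 1) + real T*(real T + 1)*(2*real T + 1) - 2*(real T*(c + real T)^2)
        = 4*real T*c^2 + 2*c*(real T)^2 + 6*c*real T + 3*(real T)^2 + real T"
      by (simp add: algebra_simps power2_eq_square)
    moreover have "0 \<le> 4*real T*c^2 + 2*c*(real T)^2 + 6*c*real T + 3*(real T)^2 + real T"
      using c by simp
    ultimately show ?thesis by (simp add: field_simps)
  qed
  also have "\<dots> = 3*(\<Sum>i\<in>{a..<a+T}. (real i)^2)"
    using sum_squares_atLeastLessThan[of a T] unfolding c_def by simp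
  finally show ?thesis .
qed

lemma sum_fourth_powers_le_sum_squares_atLeastLessThan:
  fixes a T :: nat
  assumes a: "1 \<le> a"
  shows "real T * (\<Sum>i\<in>{a..<a+T}. (real i)^4) \<le> 9/5*(\<Sum>i\<in>{a..<a+T}. (real i)^2)^2"
proof -
  define c where "c = real a - 1"
  define t where "t = real T"
  have c: "0 \<le> c" using a unfolding c_def by simp
  have t: "0 \<le> t" unfolding t_def by simp
  have "2*t*(30*t*c^4 + 60*c^3*t*(t + 1) + 30*c^2*t*(t + 1)*(2*t + 1) + 30*c*t^2*(t + 1)^2
          + t*(t + 1)*(2*t + 1)*(3*t^2 + 3*t - 1))
      \<le> 3*(6*t*c^2 + 6*c*t*(t + 1) + t*(t + 1)*(2*t + 1))^2"
  proof -
    have "3*(6*t*c^2 + 6*c*t*(t + 1) + t*(t + 1)*(2*t + 1))^2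
        - 2*t*(30*t*c^4 + 60*c^3*t*(t + 1) + 30*c^2*t*(t + 1)*(2*t + 1) + 30*c*t^2*(t + 1)^2
          + t*(t + 1)*(2*t + 1)*(3*t^2 + 3*t - 1))
        = 5*t^2 + 18*t^3 + 19*t^4 + 6*t^5 + c*(36*t^2 + 84*t^3 + 60*t^4 + 12*t^5)
          + c^2*(84*t^2 + 144*t^3 + 60*t^4) + c^3*(96*t^2 + 96*t^3) + 48*c^4*t^2"
      by (simp add: algebra_simps power2_eq_square power3_eq_cube power4_eq_xxxx eval_nat_numeral)
    moreover have "0 \<le> 5*t^2 + 18*t^3 + 19*t^4 + 6*t^5 + c*(36*t^2 + 84*t^3 + 60*t^4 + 12*t^5)
          + c^2*(84*t^2 + 144*t^3 + 60*t^4) + c^3*(96*t^2 + 96*t^3) + 48*c^4*t^2"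
      using c t by simp
    ultimately show ?thesis by linarith
  qed
  then have "2*real T*(30*(\<Sum>i\<in>{a..<a+T}. (real i)^4)) \<le> 3*(6*(\<Sum>i\<in>{a..<a+T}. (real i)^2))^2"
    unfolding sum_squares_atLeastLessThan sum_fourth_powers_atLeastLessThan c_def t_def
    by (simp add: algebra_simps)
  then show ?thesis by (simp add: power2_eq_square)
qed

definition obs_mean :: "(nat \<Rightarrow> real) \<Rightarrow> real \<Rightarrow> nat \<times> bool \<Rightarrow> real" where
  "obs_mean F \<theta> i = F (fst i) * (if snd i then cos (2*pi*real (fst i)*\<theta>) else sin (2*pi*real (fst i)*\<theta>))"

lemma block_eq_atLeastLessThan_blen: "block \<kappa> j = {\<kappa> j..<\<kappa> j + blen \<kappa> j}"
  unfolding block_def blen_def by auto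

lemma sum_block_times_UNIV_bool:
  "(\<Sum>i\<in>block \<kappa> j \<times> UNIV. g i) = (\<Sum>k\<in>block \<kappa> j. g (k, True) + g (k, False))"
proof -
  have "(\<Sum>i\<in>block \<kappa> j \<times> UNIV. g i) = (\<Sum>k\<in>block \<kappa> j. \<Sum>b\<in>UNIV. g (k, b))"
    by (simp add: sum.cartesian_product)
  then show ?thesis by (simp add: UNIV_bool add.commute)
qed

lemma ynorm2_obs_eq:
  "ynorm2 (obs_x F \<theta> \<epsilon> \<omega>) (obs_xs F \<theta> \<epsilon> \<omega>) \<kappa> j
    = (\<Sum>i\<in>block \<kappa> j \<times> UNIV. (2*pi*real (fst i))^2 * (obs_mean F \<theta> i + \<epsilon>*\<omega> i)^2)"
  unfolding sum_block_times_UNIV_bool ynorm2_def obs_x_def obs_xs_def obs_mean_def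
  by (simp add: distrib_left)

lemma dnorm2_eq_sum_obs_mean:
  "dnorm2 F \<kappa> j = (\<Sum>i\<in>block \<kappa> j \<times> UNIV. (2*pi*real (fst i))^2 * (obs_mean F \<theta> i)^2)"
  unfolding sum_block_times_UNIV_bool dnorm2_def obs_mean_def
  by (simp add: power_mult_distrib flip: distrib_left)

lemma sum_weights_eq_sigma2:
  "(\<Sum>i\<in>block \<kappa> j \<times> (UNIV :: bool set). (2*pi*real (fst i))^2) = 2 * sigma2 \<kappa> j"
  unfolding sum_block_times_UNIV_bool sigma2_def by (simp add: sum_distrib_left)

lemma sigma2_eq_sum_squares: "sigma2 \<kappa> j = (2*pi)^2 * (\<Sum>k\<in>block \<kappa> j. (real k)^2)"
  unfolding sigma2_def by (simp add: power_mult_distrib sum_distrib_left)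

lemma blen_mult_weight_le_sigma2:
  assumes "1 \<le> \<kappa> j" "k \<in> block \<kappa> j"
  shows "real (blen \<kappa> j) * (2*pi*real k)^2 \<le> 3 * sigma2 \<kappa> j"
proof -
  have "real (blen \<kappa> j) * (real k)^2 \<le> 3*(\<Sum>i\<in>block \<kappa> j. (real i)^2)"
    using assms unfolding block_eq_atLeastLessThan_blen
    by (rule square_le_sum_squares_atLeastLessThan)
  then have "(2*pi)^2 * (real (blen \<kappa> j) * (real k)^2) \<le> (2*pi)^2 * (3*(\<Sum>i\<in>block \<kappa> j. (real i)^2))"
    by (rule mult_left_mono) simp
  then show ?thesis
    unfolding sigma2_eq_sum_squares by (simp add: power_mult_distrib mult_ac)
qed

lemma blen_mult_sum_weights_squared_le_sigma2:
  assumes "1 \<le> \<kappa> j"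
  shows "real (blen \<kappa> j) * (\<Sum>k\<in>block \<kappa> j. ((2*pi*real k)^2)^2) \<le> 9/5 * (sigma2 \<kappa> j)^2"
proof -
  have "real (blen \<kappa> j) * (\<Sum>i\<in>block \<kappa> j. (real i)^4) \<le> 9/5*(\<Sum>i\<in>block \<kappa> j. (real i)^2)^2"
    using assms unfolding block_eq_atLeastLessThan_blen
    by (rule sum_fourth_powers_le_sum_squares_atLeastLessThan)
  then have "(2*pi)^4 * (real (blen \<kappa> j) * (\<Sum>i\<in>block \<kappa> j. (real i)^4))
      \<le> (2*pi)^4 * (9/5*(\<Sum>i\<in>block \<kappa> j. (real i)^2)^2)"
    by (rule mult_left_mono) simp
  moreover have "(\<Sum>k\<in>block \<kappa> j. ((2*pi*real k)^2)^2) = (2*pi)^4 * (\<Sum>i\<in>block \<kappa> j. (real i)^4)"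
    by (simp add: power_mult_distrib sum_distrib_left flip: power_mult)
  ultimately show ?thesis
    unfolding sigma2_eq_sum_squares by (simp add: power_mult_distrib mult_ac)
qed

lemma sigma2_pos:
  assumes "1 \<le> \<kappa> j" "\<kappa> j < \<kappa> (Suc j)"
  shows "0 < sigma2 \<kappa> j"
proof -
  have "0 < real (blen \<kappa> j) * (2*pi*real (\<kappa> j))^2" using assms by (simp add: blen_def)
  also have "\<dots> \<le> 3 * sigma2 \<kappa> j"
    using assms by (intro blen_mult_weight_le_sigma2) (auto simp: block_def)
  finally show ?thesis by simp
qed

lemma scaled_block_weight_le:
  assumes "1 \<le> \<kappa> j" "0 < sigma2 \<kappa> j" "0 \<le> \<phi>" "k \<in> block \<kappa> j"
  shows "\<phi> * real (blen \<kappa> j) / (15 * sigma2 \<kappa> j) * (2*pi*real k)^2 \<le> \<phi>/5"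
proof -
  have "\<phi> * (real (blen \<kappa> j) * (2*pi*real k)^2) \<le> \<phi> * (3 * sigma2 \<kappa> j)"
    using assms by (intro mult_left_mono blen_mult_weight_le_sigma2) auto
  then show ?thesis using assms(2) by (simp add: field_simps)
qed

lemma sum_scaled_block_weights_squared_le:
  assumes "1 \<le> \<kappa> j" "0 < sigma2 \<kappa> j"
  shows "(\<Sum>k\<in>block \<kappa> j. (\<phi> * real (blen \<kappa> j) / (15 * sigma2 \<kappa> j) * (2*pi*real k)^2)^2)
    \<le> \<phi>^2 * real (blen \<kappa> j) / 125"
proof -
  have "(\<Sum>k\<in>block \<kappa> j. (\<phi> * real (blen \<kappa> j) / (15 * sigma2 \<kappa> j) * (2*pi*real k)^2)^2)
      = \<phi>^2 * real (blen \<kappa> j) / (225 * (sigma2 \<kappa> j)^2)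
        * (real (blen \<kappa> j) * (\<Sum>k\<in>block \<kappa> j. ((2*pi*real k)^2)^2))"
    by (simp add: sum_distrib_left power_mult_distrib power_divide power2_eq_square mult_ac)
  also have "\<dots> \<le> \<phi>^2 * real (blen \<kappa> j) / (225 * (sigma2 \<kappa> j)^2) * (9/5 * (sigma2 \<kappa> j)^2)"
    using assms(1) by (intro mult_left_mono blen_mult_sum_weights_squared_le_sigma2) auto
  also have "\<dots> = \<phi>^2 * real (blen \<kappa> j) / 125"
    using assms(2) by (simp add: field_simps)
  finally show ?thesis .
qed

lemma block_energy_deviation_le:
  fixes F :: "nat \<Rightarrow> real" and \<theta> \<epsilon> \<phi> :: real and \<kappa> :: "nat \<Rightarrow> nat" and j :: nat
  defines "S \<equiv> sigma2 \<kappa> j" and "D \<equiv> dnorm2 F \<kappa> j" and "T \<equiv> real (blen \<kappa> j)"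
  assumes \<kappa>: "1 \<le> \<kappa> j" "\<kappa> j < \<kappa> (Suc j)" and \<epsilon>: "0 < \<epsilon>" and \<phi>: "0 < \<phi>" "\<phi> \<le> 1"
  shows "measure noise {\<omega> \<in> space noise.
      \<phi>*(D + \<epsilon>^2*S) < \<bar>ynorm2 (obs_x F \<theta> \<epsilon> \<omega>) (obs_xs F \<theta> \<epsilon> \<omega>) \<kappa> j - (D + 2*\<epsilon>^2*S)\<bar>}
    \<le> 2 * exp (- (\<phi>^2*T/24))"
proof -
  define W where "W = block \<kappa> j \<times> (UNIV :: bool set)"
  define w where "w i = (2*pi*real (fst i))^2" for i :: "nat \<times> bool"
  \<comment> \<open>With this Chernoff parameter the main term of the exponent is \<open>-\<phi>\<^sup>2 T/15\<close>; the quadratic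
      correction costs at most \<open>26/1125 \<phi>\<^sup>2 T\<close>, which leaves \<open>-\<phi>\<^sup>2 T/24\<close>.\<close>
  define l where "l = \<phi>*T/(15*\<epsilon>^2*S)"
  have W: "finite W" unfolding W_def block_def by simp
  have T: "1 \<le> T" using \<kappa>(2) unfolding T_def blen_def by simp
  have S: "0 < S" unfolding S_def using \<kappa> by (rule sigma2_pos)
  have w: "0 \<le> w i" if "i \<in> W" for i unfolding w_def by simp
  have l: "0 \<le> l" unfolding l_def using \<phi> T S by simp
  have l_\<epsilon>: "l*\<epsilon>^2 = \<phi>*T/(15*S)" unfolding l_def using \<epsilon> by simp
  have small: "l*\<epsilon>^2*w i \<le> \<phi>/5" if "i \<in> W" for i
  proof -
    have "fst i \<in> block \<kappa> j" using that unfolding W_def by auto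
    from scaled_block_weight_le[OF \<kappa>(1) S[unfolded S_def] less_imp_le[OF \<phi>(1)] this]
    show ?thesis unfolding l_\<epsilon> w_def T_def S_def .
  qed
  have Q: "(\<Sum>i\<in>W. (l*\<epsilon>^2*w i)^2) \<le> 2/125*(\<phi>^2*T)"
    using sum_scaled_block_weights_squared_le[OF \<kappa>(1) S[unfolded S_def], of \<phi>]
    unfolding l_\<epsilon> W_def sum_block_times_UNIV_bool w_def T_def S_def
    by (simp add: sum_distrib_left[symmetric] mult_ac)
  have Y: "(\<Sum>i\<in>W. w i*(obs_mean F \<theta> i + \<epsilon>*\<omega> i)^2)
      = ynorm2 (obs_x F \<theta> \<epsilon> \<omega>) (obs_xs F \<theta> \<epsilon> \<omega>) \<kappa> j" for \<omega>
    unfolding ynorm2_obs_eq W_def w_def ..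
  have D: "(\<Sum>i\<in>W. w i*(obs_mean F \<theta> i)^2) = D"
    unfolding D_def dnorm2_eq_sum_obs_mean[where \<theta>=\<theta>] W_def w_def ..
  have V: "\<epsilon>^2*(\<Sum>i\<in>W. w i) = 2*\<epsilon>^2*S"
    unfolding W_def w_def S_def sum_weights_eq_sigma2 by simp
  have "measure noise {\<omega> \<in> space noise.
      \<phi>*(D + \<epsilon>^2*S) < \<bar>ynorm2 (obs_x F \<theta> \<epsilon> \<omega>) (obs_xs F \<theta> \<epsilon> \<omega>) \<kappa> j - (D + 2*\<epsilon>^2*S)\<bar>}
    \<le> 2 * exp (- l*\<phi>*(2*\<epsilon>^2*S)/2 + 13/9*(\<Sum>i\<in>W. (l*\<epsilon>^2*w i)^2))"
    using noise_weighted_chi2_deviation_le[where W=W and w=w and m="obs_mean F \<theta>" and e=\<epsilon>,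
        OF W w l small \<phi>(2)]
    unfolding Y D V by (simp add: algebra_simps)
  also have "\<dots> \<le> 2 * exp (- (\<phi>^2*T/24))"
  proof -
    have "- l*\<phi>*(2*\<epsilon>^2*S)/2 = - \<phi>*S*(l*\<epsilon>^2)" by (simp add: algebra_simps)
    also have "\<dots> = -(\<phi>^2*T/15)" unfolding l_\<epsilon> using S by (simp add: power2_eq_square)
    finally have "- l*\<phi>*(2*\<epsilon>^2*S)/2 = -(\<phi>^2*T/15)" .
    moreover have "0 \<le> \<phi>^2*T" using T by simp
    ultimately have "- l*\<phi>*(2*\<epsilon>^2*S)/2 + 13/9*(\<Sum>i\<in>W. (l*\<epsilon>^2*w i)^2) \<le> - (\<phi>^2*T/24)"
      using Q by linarith
    then show ?thesis by simp
  qed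
  finally show ?thesis .
qed

lemma stein_mem_oracle_band:
  fixes F x xs :: "nat \<Rightarrow> real" and \<epsilon> \<phi> :: real and \<kappa> :: "nat \<Rightarrow> nat" and j :: nat
  defines "h \<equiv> oracle_h F \<epsilon> \<kappa> j"
  assumes \<epsilon>: "0 < \<epsilon>" and S: "0 < sigma2 \<kappa> j" and \<phi>: "0 < \<phi>" "\<phi> < 1"
    and close: "\<bar>ynorm2 x xs \<kappa> j - (dnorm2 F \<kappa> j + 2*\<epsilon>^2 * sigma2 \<kappa> j)\<bar>
      \<le> \<phi>*(dnorm2 F \<kappa> j + \<epsilon>^2 * sigma2 \<kappa> j)"
  shows "stein \<epsilon> \<phi> \<kappa> j x xs \<in> {h - 2*(1 - h)*\<phi>/(1 - \<phi>) .. h}"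
proof -
  define s where "s = \<epsilon>^2 * sigma2 \<kappa> j"
  define D where "D = dnorm2 F \<kappa> j"
  define Z where "Z = max 0 (ynorm2 x xs \<kappa> j - 2 * s)"
  have s: "0 < s" unfolding s_def using \<epsilon> S by simp
  have D: "0 \<le> D" unfolding D_def dnorm2_def by (intro sum_nonneg) simp
  have Ds: "0 < D + s" using s D by simp
  have stein: "stein \<epsilon> \<phi> \<kappa> j x xs = max 0 (1 - s*(1 + \<phi>)/(Z + s))"
    unfolding stein_def Z_def s_def by (simp add: mult.assoc)
  have h: "h = 1 - s/(D + s)"
    unfolding h_def oracle_h_def D_def s_def using Ds by (simp add: D_def s_def field_simps)
  have Z_le: "Z + s \<le> (1 + \<phi>)*(D + s)"
    using close D \<phi> s unfolding Z_def D_def s_def by (auto simp: algebra_simps)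
  have Z_ge: "(1 - \<phi>)*(D + s) \<le> Z + s"
    using close unfolding Z_def D_def s_def by (auto simp: algebra_simps)
  have "s/(D + s) = s*(1 + \<phi>)/((1 + \<phi>)*(D + s))" using \<phi> by simp
  also have "\<dots> \<le> s*(1 + \<phi>)/(Z + s)"
    using Z_le s \<phi> Z_def by (intro divide_left_mono) auto
  finally have upper: "1 - s*(1 + \<phi>)/(Z + s) \<le> h" unfolding h by simp
  have "s*(1 + \<phi>)/(Z + s) \<le> s*(1 + \<phi>)/((1 - \<phi>)*(D + s))"
    using Z_ge s \<phi> Ds Z_def by (intro divide_left_mono mult_pos_pos) auto
  also have "\<dots> = (1 - h)*(1 + \<phi>)/(1 - \<phi>)"
    unfolding h by simp
  also have "\<dots> = 2*(1 - h)*\<phi>/(1 - \<phi>) + (1 - h)"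
    using \<phi> by (simp add: field_simps)
  finally have lower: "h - 2*(1 - h)*\<phi>/(1 - \<phi>) \<le> 1 - s*(1 + \<phi>)/(Z + s)" by simp
  have "0 \<le> h" unfolding h_def oracle_h_def using D Ds by (simp add: D_def s_def)
  then show ?thesis unfolding stein using upper lower by auto
qed

lemma kappa_ge_one:
  fixes \<kappa> :: "nat \<Rightarrow> nat"
  assumes "\<kappa> 1 = 1" and "\<And>i. 1 \<le> i \<Longrightarrow> i \<le> J \<Longrightarrow> \<kappa> i < \<kappa> (Suc i)"
    and "1 \<le> i" "i \<le> J"
  shows "1 \<le> \<kappa> i"
  using assms(3,4)
proof (induction i rule: nat_induct_at_least)
  case (Suc i)
  then show ?case using assms(2)[of i] by simp
qed (use assms(1) in simp)

lemma (in prob_space) one_minus_prob_le_prob: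
  assumes "B \<in> events" "G \<in> events" "space M - B \<subseteq> G"
  shows "1 - prob B \<le> prob G"
  using finite_measure_mono[OF assms(3,2)] prob_compl[OF assms(1)] by simp

(* Only the coefficient sequence fcoef f enters the estimate. *)
theorem mainTheorem11:
  fixes f :: "real \<Rightarrow> real" and \<theta> \<epsilon> :: real
    and \<kappa> :: "nat \<Rightarrow> nat" and J N j k :: nat and \<phi> :: "nat \<Rightarrow> real"
  assumes f_meas: "f \<in> borel_measurable borel"
    and f_L2loc: "\<And>a b. set_integrable lborel {a..b} (\<lambda>t. (f t)^2)"
    and f_even: "\<And>t. f (- t) = f t"
    and f_per: "\<And>t. f (t + 1) = f t"
    and eps: "0 < \<epsilon>" "\<epsilon> < 1"
    and J: "1 \<le> J"
    and kap1: "\<kappa> 1 = 1" and kapN: "\<kappa> (J + 1) = N + 1"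
    and kap_mono: "\<And>i. 1 \<le> i \<Longrightarrow> i \<le> J \<Longrightarrow> \<kappa> i < \<kappa> (Suc i)"
    and j: "1 \<le> j" "j \<le> J"
    and phi_pos: "\<And>i. 0 < \<phi> i"
    and phi_lt: "\<phi> j < 1"
    and phi_T: "(\<phi> j)^2 * real (blen \<kappa> j) \<ge> 24 * ln (\<epsilon> powr (-5))"
    and k: "k \<in> block \<kappa> j"
  shows "measure noise
     {\<omega> \<in> space noise.
        stein \<epsilon> (\<phi> j) \<kappa> j (obs_x (fcoef f) \<theta> \<epsilon> \<omega>) (obs_xs (fcoef f) \<theta> \<epsilon> \<omega>)
          \<in> {oracle_h (fcoef f) \<epsilon> \<kappa> j - 2 * (1 - oracle_h (fcoef f) \<epsilon> \<kappa> j) * \<phi> j / (1 - \<phi> j)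
              .. oracle_h (fcoef f) \<epsilon> \<kappa> j}}
     \<ge> 1 - 2 * \<epsilon>^5"
proof -
  let ?D = "dnorm2 (fcoef f) \<kappa> j" and ?S = "sigma2 \<kappa> j" and ?T = "real (blen \<kappa> j)"
  let ?Y = "\<lambda>\<omega>. ynorm2 (obs_x (fcoef f) \<theta> \<epsilon> \<omega>) (obs_xs (fcoef f) \<theta> \<epsilon> \<omega>) \<kappa> j"
  define Bad where "Bad = {\<omega> \<in> space noise. \<phi> j*(?D + \<epsilon>^2*?S) < \<bar>?Y \<omega> - (?D + 2*\<epsilon>^2*?S)\<bar>}"
  have \<kappa>: "1 \<le> \<kappa> j" "\<kappa> j < \<kappa> (Suc j)"
    using kappa_ge_one[OF kap1 kap_mono j] kap_mono[OF j] by auto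
  have "measure noise Bad \<le> 2 * exp (- ((\<phi> j)^2 * ?T/24))"
    unfolding Bad_def by (rule block_energy_deviation_le[OF \<kappa> eps(1) phi_pos less_imp_le[OF phi_lt]])
  also have "\<dots> \<le> 2 * exp (5 * ln \<epsilon>)"
    using phi_T eps by (simp add: ln_powr)
  also have "exp (5 * ln \<epsilon>) = \<epsilon>^5"
    using exp_of_nat_mult[of 5 "ln \<epsilon>"] eps by simp
  finally have bad: "measure noise Bad \<le> 2 * \<epsilon>^5" .
  have Bad_sets: "Bad \<in> sets noise"
    unfolding Bad_def ynorm2_def obs_x_def obs_xs_def noise_def by measurable
  show ?thesis
    apply (rule order_trans[OF _ prob_space.one_minus_prob_le_prob[OF prob_space_noise Bad_sets]])
    subgoal using bad by simp
    subgoal unfolding stein_def ynorm2_def obs_x_def obs_xs_def noise_def by measurable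
    subgoal using stein_mem_oracle_band[OF eps(1) sigma2_pos[OF \<kappa>] phi_pos phi_lt] by (auto simp: Bad_def)
    done
qed

end
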